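(* Let $\alpha,\beta,\lambda$ be constants with $\beta\ge 3+2\alpha$ and $0<\lambda<\alpha$. Let $U=[0,1]^2$ and $S\subset U$ finite with $(0,0)\in S$, with tiles, $\beta$-tiles, parallelograms $A_i$ and the directed graph $G$ as in the context. Then the total area of all parallelograms $A_i$ at level $1$ of $G$ is at most $$\frac{2(1+\alpha)^2+\lambda(2+\alpha)}{2(1+\alpha)^2}.$$
   Context: Tiling: fix a total order of $S$ in which $p$ precedes $q$ whenever $x(p)+y(p)>x(q)+y(q)$ (ties broken arbitrarily but consistently). Process the points in this order; from the current point cast a ray vertically upward and a ray horizontally rightward, each stopping when it hits the boundary of $U$ or a ray cast from a previously processed point. This partitions $U$ into tiles $t_1,\dots,t_n$, one per point $p_i\in S$: $t_i$ is a simple rectilinear polygon with lower-left corner $p_i$, whose bottom edge $a_i$ and left edge $b_i$ lie on the two rays cast from $p_i$, and whose remaining boundary is a staircase from the top end of $b_i$ to the right end of $a_i$. A concave corner of $t_i$ is a vertex with interior angle $270^\circ$. $t_i$ is a $\beta$-tile if every axis-parallel rectangle contained in $t_i$ has area less than $\frac1\beta\mathrm{area}(t_i)$. The right tip of $t_i$ is the smallest-area region among those of the form "all points of $t_i$ to the right of a vertical line through a concave corner of $t_i$" that have area at least $\frac{\alpha}{\beta}\mathrm{area}(t_i)$; the upper tip is defined analogously with horizontal lines and points above. The main body $t_i'$ consists of the points of $t_i$ in neither tip; $a_i'$ is its bottom edge (a segment of $a_i$ starting at $p_i$), $|\cdot|$ denotes length. $A_i$ is the parallelogram with vertices $p_i$,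 $p_i+(|a_i'|,0)$, $p_i+((1+\lambda)|a_i'|,-\lambda|a_i'|)$, $p_i+(\lambda|a_i'|,-\lambda|a_i'|)$. Graph $G$: its nodes are the parallelograms $A_i$ of the $\beta$-tiles $t_i$. Fix a total order $\succ_y$ on $S$ with $p\succ_y q$ whenever $y(p)>y(q)$. If $A_i$ intersects some other node parallelogram $A_j$ with $p_i\succ_y p_j$, then $A_i$ gets exactly one outgoing edge, to the $\succ_y$-largest such $A_j$ (i.e. the one whose segment $a_j'$ is highest below $a_i'$); otherwise $A_i$ has no outgoing edge. Nodes without outgoing edges are at level $1$; a node is at level $k+1$ if its outgoing edge goes to a level-$k$ node. *)

theory Defs
  imports "HOL-Analysis.Analysis"
begin

type_synonym pt = "real \<times> real"

definition unit_square :: "pt set" where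
  "unit_square = {(0::real)..1} \<times> {(0::real)..1}"

definition area :: "pt set \<Rightarrow> real" where
  "area X = measure lebesgue X"

text \<open>An accumulator entry (q, u, r): processed point q whose upward ray ends at
  height u and whose rightward ray ends at abscissa r.\<close>

definition up_end :: "(pt \<times> real \<times> real) list \<Rightarrow> pt \<Rightarrow> real" where
  "up_end acc p = Min (insert 1 ((\<lambda>(q,u,r). snd q) `
      {e \<in> set acc. case e of (q,u,r) \<Rightarrow> snd q > snd p \<and> fst q \<le> fst p \<and> fst p \<le> r}))"

definition right_end :: "(pt \<times> real \<times> real) list \<Rightarrow> pt \<Rightarrow> real" where
  "right_end acc p = Min (insert 1 ((\<lambda>(q,u,r). fst q) `
      {e \<in> set acc. case e of (q,u,r) \<Rightarrow> fst q > fst p \<and> snd q \<le> snd p \<and> snd p \<le> u}))"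

fun build_rays :: "pt list \<Rightarrow> (pt \<times> real \<times> real) list \<Rightarrow> (pt \<times> real \<times> real) list" where
  "build_rays [] acc = acc"
| "build_rays (p # ps) acc = build_rays ps (acc @ [(p, up_end acc p, right_end acc p)])"

definition ray_up :: "pt list \<Rightarrow> pt \<Rightarrow> real" where
  "ray_up ps p = fst (the (map_of (build_rays ps []) p))"

definition ray_right :: "pt list \<Rightarrow> pt \<Rightarrow> real" where
  "ray_right ps p = snd (the (map_of (build_rays ps []) p))"

definition aseg :: "pt list \<Rightarrow> pt \<Rightarrow> pt set" where
  "aseg ps p = {fst p .. ray_right ps p} \<times> {snd p}"

definition bseg :: "pt list \<Rightarrow> pt \<Rightarrow> pt set" where
  "bseg ps p = {fst p} \<times> {snd p .. ray_up ps p}"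

definition segs :: "pt list \<Rightarrow> pt set" where
  "segs ps = (\<Union>p\<in>set ps. aseg ps p \<union> bseg ps p)"

text \<open>The (closed) tile with lower-left corner p: the closure of the points z strictly
  to the upper right of p such that the open box between p and z meets no ray,
  together with the two rays from p (relevant only for degenerate tiles).\<close>
definition tile :: "pt list \<Rightarrow> pt \<Rightarrow> pt set" where
  "tile ps p = closure {z \<in> unit_square. fst p < fst z \<and> snd p < snd z \<and>
        ({fst p<..<fst z} \<times> {snd p<..<snd z}) \<inter> segs ps = {}}
     \<union> aseg ps p \<union> bseg ps p"

definition beta_tile :: "real \<Rightarrow> pt set \<Rightarrow> bool" where
  "beta_tile \<beta> t \<longleftrightarrow> (\<forall>a b c d. a \<le> b \<and> c \<le> d \<and> {a..b} \<times> {c..d} \<subseteq> t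
        \<longrightarrow> (b - a) * (d - c) < area t / \<beta>)"

definition quadrant :: "pt \<Rightarrow> real \<Rightarrow> real \<Rightarrow> real \<Rightarrow> pt set" where
  "quadrant c e sx sy = {z. 0 < sx * (fst z - fst c) \<and> sx * (fst z - fst c) < e \<and>
                            0 < sy * (snd z - snd c) \<and> sy * (snd z - snd c) < e}"

text \<open>A vertex with interior angle 270 degrees: near c, exactly three of the four
  quadrants lie in t and the remaining one lies outside t.\<close>
definition concave_corner :: "pt set \<Rightarrow> pt \<Rightarrow> bool" where
  "concave_corner t c \<longleftrightarrow> c \<in> t \<and> (\<exists>e>0.
      let Q = {quadrant c e 1 1, quadrant c e 1 (-1), quadrant c e (-1) 1, quadrant c e (-1) (-1)}
      in \<exists>q\<in>Q. q \<inter> t = {} \<and> (\<forall>q'\<in>Q - {q}. q' \<subseteq> t))"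

definition right_cands :: "real \<Rightarrow> real \<Rightarrow> pt set \<Rightarrow> pt set set" where
  "right_cands \<alpha> \<beta> t = {R. \<exists>c. concave_corner t c \<and> R = {z \<in> t. fst z > fst c}
                                  \<and> area R \<ge> \<alpha> / \<beta> * area t}"

definition upper_cands :: "real \<Rightarrow> real \<Rightarrow> pt set \<Rightarrow> pt set set" where
  "upper_cands \<alpha> \<beta> t = {R. \<exists>c. concave_corner t c \<and> R = {z \<in> t. snd z > snd c}
                                  \<and> area R \<ge> \<alpha> / \<beta> * area t}"

definition smallest_area :: "pt set set \<Rightarrow> pt set" where
  "smallest_area C = (if C = {} then {} else (SOME R. R \<in> C \<and> (\<forall>R'\<in>C. area R \<le> area R')))"

definition right_tip :: "real \<Rightarrow> real \<Rightarrow> pt set \<Rightarrow> pt set" where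
  "right_tip \<alpha> \<beta> t = smallest_area (right_cands \<alpha> \<beta> t)"

definition upper_tip :: "real \<Rightarrow> real \<Rightarrow> pt set \<Rightarrow> pt set" where
  "upper_tip \<alpha> \<beta> t = smallest_area (upper_cands \<alpha> \<beta> t)"

definition main_body :: "real \<Rightarrow> real \<Rightarrow> pt set \<Rightarrow> pt set" where
  "main_body \<alpha> \<beta> t = t - right_tip \<alpha> \<beta> t - upper_tip \<alpha> \<beta> t"

definition a'_len :: "real \<Rightarrow> real \<Rightarrow> pt list \<Rightarrow> pt \<Rightarrow> real" where
  "a'_len \<alpha> \<beta> ps p = Sup {fst z - fst p | z. z \<in> main_body \<alpha> \<beta> (tile ps p) \<and> snd z = snd p}"

definition parallelogram :: "real \<Rightarrow> pt \<Rightarrow> real \<Rightarrow> pt set" where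
  "parallelogram lam p L = convex hull {p, (fst p + L, snd p),
       (fst p + (1 + lam) * L, snd p - lam * L), (fst p + lam * L, snd p - lam * L)}"

definition paraA :: "real \<Rightarrow> real \<Rightarrow> real \<Rightarrow> pt list \<Rightarrow> pt \<Rightarrow> pt set" where
  "paraA \<alpha> \<beta> lam ps p = parallelogram lam p (a'_len \<alpha> \<beta> ps p)"

definition G_nodes :: "real \<Rightarrow> pt list \<Rightarrow> pt set" where
  "G_nodes \<beta> ps = {p \<in> set ps. beta_tile \<beta> (tile ps p)}"

text \<open>gy is the strict total order \<succ>_y; (p,q) \<in> gy means p \<succ>_y q.
  The outgoing edge of node p goes to the gy-largest candidate below p.\<close>
definition out_candidates :: "real \<Rightarrow> real \<Rightarrow> real \<Rightarrow> pt list \<Rightarrow> (pt \<times> pt) set \<Rightarrow> pt \<Rightarrow> pt set" where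
  "out_candidates \<alpha> \<beta> lam ps gy p = {q \<in> G_nodes \<beta> ps. q \<noteq> p \<and> (p, q) \<in> gy \<and>
        paraA \<alpha> \<beta> lam ps p \<inter> paraA \<alpha> \<beta> lam ps q \<noteq> {}}"

definition G_edge :: "real \<Rightarrow> real \<Rightarrow> real \<Rightarrow> pt list \<Rightarrow> (pt \<times> pt) set \<Rightarrow> pt \<Rightarrow> pt \<Rightarrow> bool" where
  "G_edge \<alpha> \<beta> lam ps gy p q \<longleftrightarrow> p \<in> G_nodes \<beta> ps \<and> q \<in> out_candidates \<alpha> \<beta> lam ps gy p \<and>
        (\<forall>q'\<in>out_candidates \<alpha> \<beta> lam ps gy p. q' = q \<or> (q, q') \<in> gy)"

definition level1 :: "real \<Rightarrow> real \<Rightarrow> real \<Rightarrow> pt list \<Rightarrow> (pt \<times> pt) set \<Rightarrow> pt set" where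
  "level1 \<alpha> \<beta> lam ps gy = {p \<in> G_nodes \<beta> ps. \<not> (\<exists>q. G_edge \<alpha> \<beta> lam ps gy p q)}"

end

theory Submission
  imports Defs
begin

text \<open>
  Two level-1 parallelograms are disjoint: if they met, the higher of the two would have an
  outgoing edge. So it suffices to show that every parallelogram of a beta-tile lies in the unit
  square together with a trapezoid of height lam / (1 + \<alpha>) hanging below it, whose area is
  lam (2 + \<alpha>) / (2 (1 + \<alpha>)^2).

  This follows from |a'| (1 + \<alpha>) \<le> 1 - x(p). The main body ends at the concave corner c that cuts
  off the right tip. The rectangle spanned by p and c lies in the tile, so it has area less than
  area t / \<beta>, while the right tip has area at least \<alpha> area t / \<beta> and lies in the strip of the same
  height to the right of c; hence \<alpha> (x(c) - x(p)) < 1 - x(c). The right tip exists because the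
  corner below the right end of the top edge of a beta-tile cuts off all of the tile except the
  top rectangle, i.e. at least a fraction 1 - 1/\<beta> \<ge> \<alpha>/\<beta> of its area.
\<close>

section \<open>Rays\<close>

lemma up_end_bounds: "up_end acc p \<le> 1" "snd p \<le> 1 \<Longrightarrow> snd p \<le> up_end acc p"
  unfolding up_end_def by (auto simp: Min_le_iff)

lemma right_end_bounds: "right_end acc p \<le> 1" "fst p \<le> 1 \<Longrightarrow> fst p \<le> right_end acc p"
  unfolding right_end_def by (auto simp: Min_le_iff)

lemma build_rays_keys: "fst ` set (build_rays qs acc) = fst ` set acc \<union> set qs"
  by (induction qs arbitrary: acc) auto

lemma build_rays_bounds:
  assumes "(q, u, r) \<in> set (build_rays qs acc)" "(q, u, r) \<notin> set acc" "q \<in> unit_square"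
  shows "snd q \<le> u \<and> u \<le> 1 \<and> fst q \<le> r \<and> r \<le> 1"
  using assms
proof (induction qs arbitrary: acc)
  case (Cons a qs)
  then show ?case
    using up_end_bounds right_end_bounds by (fastforce simp: unit_square_def)
qed simp

lemma ray_bounds:
  assumes "p \<in> set ps" "p \<in> unit_square"
  shows "snd p \<le> ray_up ps p" "ray_up ps p \<le> 1" "fst p \<le> ray_right ps p" "ray_right ps p \<le> 1"
proof -
  obtain u r where "map_of (build_rays ps []) p = Some (u, r)"
    using assms(1) build_rays_keys[of ps "[]"]
    by (metis Un_iff map_of_eq_None_iff not_Some_eq surj_pair)
  then have "(p, u, r) \<in> set (build_rays ps [])" "ray_up ps p = u" "ray_right ps p = r"
    by (auto simp: ray_up_def ray_right_def dest: map_of_SomeD)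
  then show "snd p \<le> ray_up ps p" "ray_up ps p \<le> 1" "fst p \<le> ray_right ps p" "ray_right ps p \<le> 1"
    using build_rays_bounds assms(2) by auto
qed

section \<open>Tiles\<close>

definition tile_core :: "pt list \<Rightarrow> pt \<Rightarrow> pt set" where
  "tile_core ps p = {z \<in> unit_square. fst p < fst z \<and> snd p < snd z \<and>
        ({fst p<..<fst z} \<times> {snd p<..<snd z}) \<inter> segs ps = {}}"

lemma tile_eq: "tile ps p = closure (tile_core ps p) \<union> aseg ps p \<union> bseg ps p"
  by (simp add: tile_def tile_core_def)

lemma closed_unit_square: "closed unit_square"
  unfolding unit_square_def by (intro closed_Times) auto

lemma unit_square_cbox: "unit_square = cbox (0, 0) (1, 1)"
  by (simp add: unit_square_def cbox_Pair_eq)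

lemma closure_tile_core_subset: "closure (tile_core ps p) \<subseteq> unit_square"
  by (rule closure_minimal) (auto simp: tile_core_def closed_unit_square)

lemma closure_tile_core_ge:
  assumes "z \<in> closure (tile_core ps p)"
  shows "fst p \<le> fst z" "snd p \<le> snd z"
proof -
  have "closure (tile_core ps p) \<subseteq> {z. fst p \<le> fst z \<and> snd p \<le> snd z}"
    by (rule closure_minimal)
      (auto simp: tile_core_def intro!: closed_Collect_conj closed_Collect_le continuous_intros)
  then show "fst p \<le> fst z" "snd p \<le> snd z" using assms by auto
qed

lemma tile_ge: "z \<in> tile ps p \<Longrightarrow> fst p \<le> fst z \<and> snd p \<le> snd z"
  using closure_tile_core_ge[of z ps p] by (auto simp: tile_eq aseg_def bseg_def)

lemma tile_subset_unit_square:
  assumes "p \<in> set ps" "p \<in> unit_square"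
  shows "tile ps p \<subseteq> unit_square"
  using closure_tile_core_subset[of ps p] ray_bounds[OF assms] assms(2)
  by (auto simp: tile_eq aseg_def bseg_def unit_square_def)

lemma compact_tile:
  assumes "p \<in> set ps" "p \<in> unit_square"
  shows "compact (tile ps p)"
proof -
  have "closed (tile ps p)"
    unfolding tile_eq aseg_def bseg_def by (intro closed_Un closed_Times) auto
  moreover have "bounded (tile ps p)"
    using tile_subset_unit_square[OF assms] unfolding unit_square_cbox
    by (rule bounded_subset[OF bounded_cbox])
  ultimately show ?thesis by (simp add: compact_eq_bounded_closed)
qed

lemma bounded_tile_core: "bounded (tile_core ps p)"
  using bounded_subset[OF bounded_cbox] tile_core_def unit_square_cbox by blast

lemma point_in_tile:
  assumes "p \<in> set ps" "p \<in> unit_square"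
  shows "p \<in> tile ps p"
  using ray_bounds[OF assms] by (cases p) (auto simp: tile_eq aseg_def)

lemma tile_upper_right_in_closure:
  "z \<in> tile ps p \<Longrightarrow> fst p < fst z \<Longrightarrow> snd p < snd z \<Longrightarrow> z \<in> closure (tile_core ps p)"
  by (auto simp: tile_eq aseg_def bseg_def)

lemma closure_tile_core_avoids_segs:
  assumes "z \<in> closure (tile_core ps p)" "w \<in> segs ps"
    "fst p < fst w" "fst w < fst z" "snd p < snd w" "snd w < snd z"
  shows False
proof -
  let ?O = "{x::pt. fst w < fst x \<and> snd w < snd x}"
  have "open ?O" by (intro open_Collect_conj open_Collect_less continuous_intros)
  moreover have "z \<in> ?O" using assms by auto
  ultimately have "?O \<inter> tile_core ps p \<noteq> {}"
    using assms(1) open_Int_closure_eq_empty by blast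
  then obtain z' where z': "z' \<in> tile_core ps p" "fst w < fst z'" "snd w < snd z'" by blast
  then have "w \<in> {fst p<..<fst z'} \<times> {snd p<..<snd z'}" using assms by (simp add: mem_Times_iff)
  then show False using z'(1) assms(2) by (auto simp: tile_core_def)
qed

lemma tile_core_down_closed:
  assumes "z \<in> closure (tile_core ps p)" "p \<in> unit_square"
    "fst p < fst w" "fst w < fst z" "snd p < snd w" "snd w < snd z"
  shows "w \<in> tile_core ps p"
proof -
  have "z \<in> unit_square" using assms(1) closure_tile_core_subset by blast
  then have "w \<in> unit_square" using assms by (auto simp: unit_square_def mem_Times_iff)
  moreover have "v \<notin> segs ps"
    if "fst p < fst v" "fst v < fst w" "snd p < snd v" "snd v < snd w" for v
    using closure_tile_core_avoids_segs[OF assms(1), of v] that assms by auto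
  ultimately show ?thesis using assms by (auto simp: tile_core_def)
qed

lemma tile_down_closed:
  assumes "z \<in> tile ps p" "p \<in> unit_square"
    "fst p < fst w" "fst w < fst z" "snd p < snd w" "snd w < snd z"
  shows "w \<in> tile ps p"
  using tile_core_down_closed[OF tile_upper_right_in_closure[OF assms(1)] assms(2-)] assms
  by (auto simp: tile_eq dest: closure_subset[THEN subsetD])

lemma tile_avoids_segs:
  assumes "z \<in> tile ps p" "w \<in> segs ps"
    "fst p < fst w" "fst w < fst z" "snd p < snd w" "snd w < snd z"
  shows False
  using closure_tile_core_avoids_segs[OF tile_upper_right_in_closure[OF assms(1)] assms(2-)] assms
  by auto

lemma cbox_subset_closure_tile_core:
  assumes "z \<in> closure (tile_core ps p)" "p \<in> unit_square" "fst p < fst z" "snd p < snd z"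
  shows "cbox p z \<subseteq> closure (tile_core ps p)"
proof -
  have "box p z \<subseteq> tile_core ps p"
    using tile_core_down_closed[OF assms(1,2)] by (auto simp: mem_box Basis_prod_def inner_Pair_0)
  then have "closure (box p z) \<subseteq> closure (tile_core ps p)" by (rule closure_mono)
  moreover have "box p z \<noteq> {}"
    using assms(3,4) by (auto simp: box_ne_empty Basis_prod_def inner_Pair_0)
  ultimately show ?thesis by simp
qed

text \<open>A ray crossing the box between p and (x2, y) either starts at a point of S with abscissa in
  [fst z, x2), or is a horizontal ray coming from the left and then also crosses the box between
  p and z.\<close>

lemma tile_core_extend_right:
  assumes z: "z \<in> closure (tile_core ps p)" "fst p < fst z" "snd p < snd z"
    and pU: "p \<in> unit_square" and x2: "fst z < x2" "x2 \<le> 1"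
    and gap: "\<forall>q\<in>set ps. fst q < fst z \<or> x2 \<le> fst q"
    and y: "snd p < y" "y < snd z"
  shows "(x2, y) \<in> tile_core ps p"
proof -
  have "w \<notin> segs ps" if w: "fst p < fst w" "fst w < x2" "snd p < snd w" "snd w < y" for w
  proof
    assume "w \<in> segs ps"
    then obtain q where q: "q \<in> set ps" "w \<in> aseg ps q \<union> bseg ps q" unfolding segs_def by blast
    have "fst z \<le> fst w"
      using closure_tile_core_avoids_segs[OF z(1) \<open>w \<in> segs ps\<close>] w y by force
    then have "w \<in> aseg ps q" "fst q < fst z"
      using gap q w by (auto simp: aseg_def bseg_def)
    define v where "v = (max (fst q) ((fst p + fst z) / 2), snd w)"
    have "v \<in> aseg ps q"
      using \<open>w \<in> aseg ps q\<close> \<open>fst z \<le> fst w\<close> z(2) by (auto simp: aseg_def v_def)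
    then have "v \<in> segs ps" using q(1) unfolding segs_def by blast
    then show False
      using closure_tile_core_avoids_segs[OF z(1), of v] w y z(2) \<open>fst q < fst z\<close>
      by (auto simp: v_def less_max_iff_disj)
  qed
  moreover have "(x2, y) \<in> unit_square"
    using closure_tile_core_subset z x2 y pU by (force simp: unit_square_def)
  ultimately show ?thesis using x2 y z by (auto simp: tile_core_def)
qed

lemma closure_horizontal_end:
  fixes a b y :: real
  assumes "{a<..<b} \<times> {y} \<subseteq> X" "a < b"
  shows "(b, y) \<in> closure X"
  using closure_mono[OF assms(1)] closure_greaterThanLessThan[OF assms(2)] assms(2)
  by (auto simp: closure_Times)

lemma closure_vertical_end:
  fixes a b x :: real
  assumes "{x} \<times> {a<..<b} \<subseteq> X" "a < b"
  shows "(x, b) \<in> closure X"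
  using closure_mono[OF assms(1)] closure_greaterThanLessThan[OF assms(2)] assms(2)
  by (auto simp: closure_Times)

section \<open>Concave corners\<close>

lemma quadrant_point:
  assumes "sx \<in> {-1, 1}" "sy \<in> {-1, 1}" "0 < d" "d < e"
  shows "(fst c + sx * d, snd c + sy * d) \<in> quadrant c e sx sy"
  using assms by (auto simp: quadrant_def)

lemma quadrant_sign_eq:
  assumes "sx \<in> {-1, 1}" "sy \<in> {-1, 1}" "sx' \<in> {-1, 1}" "sy' \<in> {-1, 1}" "0 < e"
    and "quadrant c e sx sy = quadrant c e sx' sy'"
  shows "sx = sx' \<and> sy = sy'"
proof -
  have "(fst c + sx * (e / 2), snd c + sy * (e / 2)) \<in> quadrant c e sx' sy'"
    using quadrant_point[OF assms(1,2), of "e / 2" e c] assms(5,6) by auto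
  then show ?thesis using assms(1-5) by (auto simp: quadrant_def)
qed

lemma concave_cornerE:
  assumes "concave_corner t c"
  obtains e sx sy where "0 < e" "sx \<in> {-1, 1}" "sy \<in> {-1, 1}" "c \<in> t"
    "quadrant c e sx sy \<inter> t = {}"
    "\<And>sx' sy'. sx' \<in> {-1, 1} \<Longrightarrow> sy' \<in> {-1, 1} \<Longrightarrow> (sx', sy') \<noteq> (sx, sy) \<Longrightarrow>
      quadrant c e sx' sy' \<subseteq> t"
proof -
  let ?Q = "\<lambda>e. {quadrant c e 1 1, quadrant c e 1 (-1),
    quadrant c e (-1) 1, quadrant c e (-1) (-1)}"
  obtain e Q0 where e: "0 < e" and Q: "Q0 \<in> ?Q e" and missing: "Q0 \<inter> t = {}"
    and rest: "\<And>Q'. Q' \<in> ?Q e - {Q0} \<Longrightarrow> Q' \<subseteq> t"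
    using assms unfolding concave_corner_def Let_def by metis
  obtain sx sy where s: "sx \<in> {-1, 1}" "sy \<in> {-1, 1}" and Q0: "Q0 = quadrant c e sx sy"
    using Q by auto
  have "quadrant c e sx' sy' \<subseteq> t"
    if s': "sx' \<in> {-1, 1}" "sy' \<in> {-1, 1}" "(sx', sy') \<noteq> (sx, sy)" for sx' sy'
  proof (rule rest)
    have "quadrant c e sx' sy' \<noteq> Q0"
    proof
      assume "quadrant c e sx' sy' = Q0"
      then show False using quadrant_sign_eq[OF s'(1,2) s e] s'(3) unfolding Q0 by auto
    qed
    moreover have "quadrant c e sx' sy' \<in> ?Q e" using s'(1,2) by auto
    ultimately show "quadrant c e sx' sy' \<in> ?Q e - {Q0}" by blast
  qed
  moreover have "c \<in> t" using assms by (simp add: concave_corner_def)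
  ultimately show thesis using that[OF e s] missing unfolding Q0 by blast
qed

lemma concave_cornerI:
  assumes "c \<in> t" "0 < e" "quadrant c e 1 1 \<inter> t = {}" "quadrant c e 1 (-1) \<subseteq> t"
    "quadrant c e (-1) 1 \<subseteq> t" "quadrant c e (-1) (-1) \<subseteq> t"
  shows "concave_corner t c"
  unfolding concave_corner_def Let_def
proof (intro conjI exI[of _ e] bexI[of _ "quadrant c e 1 1"] ballI)
  fix q assume "q \<in> {quadrant c e 1 1, quadrant c e 1 (-1), quadrant c e (-1) 1,
    quadrant c e (-1) (-1)} - {quadrant c e 1 1}"
  then show "q \<subseteq> t" using assms(4-6) by auto
qed (use assms(1-3) in auto)

text \<open>Below and to the left of any point of a tile the tile is full, so the quadrant missing at a
  concave corner can only be the north-east one.\<close>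

lemma concave_corner_of_tile:
  assumes cc: "concave_corner (tile ps p) c" and pU: "p \<in> unit_square"
  obtains e where "0 < e" "fst p < fst c" "snd p < snd c"
    "quadrant c e 1 1 \<inter> tile ps p = {}"
    "quadrant c e 1 (-1) \<subseteq> tile ps p" "quadrant c e (-1) 1 \<subseteq> tile ps p"
proof -
  let ?t = "tile ps p"
  obtain e sx sy where e: "0 < e" and s: "sx \<in> {-1, 1}" "sy \<in> {-1, 1}"
    and missing: "quadrant c e sx sy \<inter> ?t = {}"
    and others: "\<And>sx' sy'. sx' \<in> {-1, 1} \<Longrightarrow> sy' \<in> {-1, 1} \<Longrightarrow> (sx', sy') \<noteq> (sx, sy) \<Longrightarrow>
      quadrant c e sx' sy' \<subseteq> ?t"
    using concave_cornerE[OF cc] by metis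
  have near: "(fst c + sx' * (e / 2), snd c + sy' * (e / 2)) \<in> ?t"
    if "sx' \<in> {-1, 1}" "sy' \<in> {-1, 1}" "(sx', sy') \<noteq> (sx, sy)" for sx' sy'
    using others[OF that] quadrant_point[OF that(1,2), of "e / 2" e c] e by auto
  have pc: "fst p < fst c \<and> snd p < snd c"
  proof (cases "(sx, sy) = (-1, -1)")
    case True
    then show ?thesis using near[of "-1" 1] near[of 1 "-1"] tile_ge e by fastforce
  next
    case False
    then show ?thesis using near[of "-1" "-1"] tile_ge e by fastforce
  qed
  have "(sx, sy) = (1, 1)"
  proof (rule ccontr)
    assume "(sx, sy) \<noteq> (1, 1)"
    then have z: "(fst c + 1 * (e / 2), snd c + 1 * (e / 2)) \<in> ?t" using near by blast
    define d where "d = min (e / 2) (min (fst c - fst p) (snd c - snd p)) / 2"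
    have d: "0 < d" "d < e / 2" "d < fst c - fst p" "d < snd c - snd p"
      using e pc by (auto simp: d_def)
    have "(fst c + sx * d, snd c + sy * d) \<in> ?t"
      by (rule tile_down_closed[OF z pU]) (use s d in auto)
    moreover have "(fst c + sx * d, snd c + sy * d) \<in> quadrant c e sx sy"
      using quadrant_point[OF s, of d e] d by auto
    ultimately show False using missing by blast
  qed
  then show thesis
    using that[OF e] pc missing others[of 1 "-1"] others[of "-1" 1] by auto
qed

lemma tile_right_of_concave_corner:
  assumes cc: "concave_corner (tile ps p) c" and pU: "p \<in> unit_square"
    and z: "z \<in> tile ps p" "fst c < fst z"
  shows "snd z \<le> snd c"
proof (rule ccontr)
  assume above: "\<not> snd z \<le> snd c"
  obtain e where e: "0 < e" "fst p < fst c" "snd p < snd c" "quadrant c e 1 1 \<inter> tile ps p = {}"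
    using concave_corner_of_tile[OF cc pU] by metis
  define d where "d = min e (min (fst z - fst c) (snd z - snd c)) / 2"
  have d: "0 < d" "d < e" "d < fst z - fst c" "d < snd z - snd c"
    using e z(2) above by (auto simp: d_def)
  have "(fst c + 1 * d, snd c + 1 * d) \<in> tile ps p"
    by (rule tile_down_closed[OF z(1) pU]) (use e d in auto)
  moreover have "(fst c + 1 * d, snd c + 1 * d) \<in> quadrant c e 1 1"
    using quadrant_point[of 1 1 d e c] d by auto
  ultimately show False using e(4) by blast
qed

lemma segs_near_concave_corner:
  assumes pU: "p \<in> unit_square" and e: "0 < e"
    and NW: "quadrant c e (-1) 1 \<subseteq> tile ps p" and SE: "quadrant c e 1 (-1) \<subseteq> tile ps p"
    and w: "w \<in> segs ps" "fst p < fst w" "snd p < snd w" "fst w < fst c + e" "snd w < snd c + e"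
  shows "fst c \<le> fst w \<and> snd c \<le> snd w"
proof (rule ccontr)
  assume "\<not> ?thesis"
  then consider "fst w < fst c" | "snd w < snd c" by linarith
  then show False
  proof cases
    case 1
    define d where "d = min e (min (fst c - fst w) (snd c + e - snd w)) / 2"
    have d: "0 < d" "d < e" "d < fst c - fst w" "d < snd c + e - snd w"
      using 1 e w by (auto simp: d_def min_def)
    then have "(fst c - d, snd c + e - d) \<in> quadrant c e (-1) 1" by (auto simp: quadrant_def)
    then have "(fst c - d, snd c + e - d) \<in> tile ps p" using NW by blast
    then show False by (rule tile_avoids_segs[OF _ w(1,2)]) (use d w in auto)
  next
    case 2
    define d where "d = min e (min (snd c - snd w) (fst c + e - fst w)) / 2"
    have d: "0 < d" "d < e" "d < snd c - snd w" "d < fst c + e - fst w"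
      using 2 e w by (auto simp: d_def min_def)
    then have "(fst c + e - d, snd c - d) \<in> quadrant c e 1 (-1)" by (auto simp: quadrant_def)
    then have "(fst c + e - d, snd c - d) \<in> tile ps p" using SE by blast
    then show False by (rule tile_avoids_segs[OF _ w(1,2)]) (use d w in auto)
  qed
qed

lemma closed_segs: "closed (segs ps)"
  unfolding segs_def aseg_def bseg_def by (auto intro!: closed_UN closed_Un closed_Times)

text \<open>The points just north-east of a concave corner lie in the unit square but not in the tile,
  so rays pass arbitrarily close to the corner.\<close>

lemma concave_corner_in_segs:
  assumes cc: "concave_corner (tile ps p) c" and p: "p \<in> set ps" "p \<in> unit_square"
  shows "c \<in> segs ps"
proof -
  obtain e where e: "0 < e" "fst p < fst c" "snd p < snd c"
    and NE: "quadrant c e 1 1 \<inter> tile ps p = {}"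
    and SE: "quadrant c e 1 (-1) \<subseteq> tile ps p" and NW: "quadrant c e (-1) 1 \<subseteq> tile ps p"
    using concave_corner_of_tile[OF cc p(2)] by metis
  have "\<exists>w\<in>segs ps. dist w c < eps" if "0 < eps" for eps
  proof -
    define d where "d = min e eps / 2"
    have d: "0 < d" "d < e" "2 * d \<le> eps" using e \<open>0 < eps\<close> by (auto simp: d_def)
    let ?z = "(fst c + 1 * d, snd c + 1 * d)"
    have "?z \<notin> tile_core ps p"
      using NE quadrant_point[of 1 1 d e c] d closure_subset unfolding tile_eq by blast
    moreover have "(fst c + 1 * d, snd c + -1 * d) \<in> unit_square"
      "(fst c + -1 * d, snd c + 1 * d) \<in> unit_square"
      using SE NW quadrant_point[of _ _ d e c] d tile_subset_unit_square[OF p] by blast+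
    then have "?z \<in> unit_square" using e p(2) by (auto simp: unit_square_def)
    ultimately obtain w where w: "w \<in> segs ps" "fst p < fst w" "fst w < fst c + d"
      "snd p < snd w" "snd w < snd c + d"
      using e d unfolding tile_core_def by auto
    then have "fst c \<le> fst w" "snd c \<le> snd w"
      using segs_near_concave_corner[OF p(2) e(1) NW SE w(1,2,4)] d by auto
    then have "dist w c \<le> (fst w - fst c) + (snd w - snd c)"
      using sqrt_sum_squares_le_sum_abs[of "fst w - fst c" "snd w - snd c"]
      by (cases w, cases c) (simp add: dist_Pair_Pair dist_real_def)
    then show ?thesis using w d by force
  qed
  then have "c \<in> closure (segs ps)" by (simp add: closure_approachable)
  then show ?thesis using closed_segs by simp
qed

lemma concave_corner_in_points:
  assumes cc: "concave_corner (tile ps p) c" and p: "p \<in> set ps" "p \<in> unit_square"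
  shows "c \<in> set ps"
proof -
  obtain e where e: "0 < e" "fst p < fst c" "snd p < snd c"
    and SE: "quadrant c e 1 (-1) \<subseteq> tile ps p" and NW: "quadrant c e (-1) 1 \<subseteq> tile ps p"
    using concave_corner_of_tile[OF cc p(2)] by metis
  obtain q where q: "q \<in> set ps" "c \<in> aseg ps q \<union> bseg ps q"
    using concave_corner_in_segs[OF cc p] unfolding segs_def by blast
  have near: "fst c \<le> fst w \<and> snd c \<le> snd w"
    if "w \<in> aseg ps q \<union> bseg ps q" "fst p < fst w" "snd p < snd w"
      "fst w \<le> fst c" "snd w \<le> snd c" for w
    using segs_near_concave_corner[OF p(2) e(1) NW SE, of w] that q(1) e(1)
    unfolding segs_def by force
  have "c = q"
  proof (cases "c \<in> aseg ps q")
    case True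
    define w where "w = (max (fst q) ((fst p + fst c) / 2), snd c)"
    have "w \<in> aseg ps q" using True e(2) by (auto simp: aseg_def w_def)
    then have "fst c \<le> fst w" using near[of w] e(2,3) True
      by (auto simp: w_def aseg_def less_max_iff_disj)
    then show ?thesis using True e(2) by (auto simp: aseg_def w_def prod_eq_iff le_max_iff_disj)
  next
    case False
    then have bseg: "c \<in> bseg ps q" using q(2) by blast
    define w where "w = (fst c, max (snd q) ((snd p + snd c) / 2))"
    have "w \<in> bseg ps q" using bseg e(3) by (auto simp: bseg_def w_def)
    then have "snd c \<le> snd w" using near[of w] e(2,3) bseg
      by (auto simp: w_def bseg_def less_max_iff_disj)
    then show ?thesis using bseg e(3) by (auto simp: bseg_def w_def prod_eq_iff le_max_iff_disj)
  qed
  then show ?thesis using q(1) by simp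
qed

section \<open>Areas\<close>

lemma area_cbox: "a \<le> b \<Longrightarrow> c \<le> d \<Longrightarrow> area (cbox (a, c) (b, d)) = (b - a) * (d - c)"
  unfolding area_def by (simp add: content_Pair)

lemma area_mono: "X \<subseteq> Y \<Longrightarrow> Y \<in> lmeasurable \<Longrightarrow> area X \<le> area Y"
  unfolding area_def by (metis measure_mono_fmeasurable measure_nonneg measure_notin_sets)

lemma area_Un_le: "X \<in> sets lebesgue \<Longrightarrow> Y \<in> sets lebesgue \<Longrightarrow> area (X \<union> Y) \<le> area X + area Y"
  unfolding area_def by (rule measure_Un_le)

lemma area_segment_horizontal: "area ({a..b} \<times> {c}) = 0"
proof -
  have "{a..b} \<times> {c} = cbox (a, c) (b, c)" by (simp add: cbox_Pair_eq)
  then show ?thesis by (simp add: area_def content_Pair)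
qed

lemma area_segment_vertical: "area ({c} \<times> {a..b}) = 0"
proof -
  have "{c} \<times> {a..b} = cbox (c, a) (c, b)" by (simp add: cbox_Pair_eq)
  then show ?thesis by (simp add: area_def content_Pair)
qed

lemma area_rays:
  shows "aseg ps p \<union> bseg ps p \<in> lmeasurable" "area (aseg ps p \<union> bseg ps p) = 0"
proof -
  have "aseg ps p \<in> lmeasurable" "bseg ps p \<in> lmeasurable"
    unfolding aseg_def bseg_def by (auto intro!: lmeasurable_compact compact_Times)
  then show "aseg ps p \<union> bseg ps p \<in> lmeasurable" by auto
  have "area (aseg ps p \<union> bseg ps p) \<le> area (aseg ps p) + area (bseg ps p)"
    using \<open>aseg ps p \<in> lmeasurable\<close> \<open>bseg ps p \<in> lmeasurable\<close> by (intro area_Un_le) auto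
  moreover have "area (aseg ps p) = 0" "area (bseg ps p) = 0"
    unfolding aseg_def bseg_def by (rule area_segment_horizontal area_segment_vertical)+
  ultimately show "area (aseg ps p \<union> bseg ps p) = 0"
    using measure_nonneg[of lebesgue "aseg ps p \<union> bseg ps p"] unfolding area_def by linarith
qed

section \<open>Right tips of beta-tiles\<close>

lemma beta_tileD:
  "beta_tile \<beta> t \<Longrightarrow> a \<le> b \<Longrightarrow> c \<le> d \<Longrightarrow> {a..b} \<times> {c..d} \<subseteq> t \<Longrightarrow> (b - a) * (d - c) < area t / \<beta>"
  unfolding beta_tile_def by blast

lemma beta_tile_area_pos:
  assumes "beta_tile \<beta> t" "z \<in> t" "0 < \<beta>"
  shows "0 < area t"
proof -
  have "{fst z..fst z} \<times> {snd z..snd z} \<subseteq> t" using assms(2) by (cases z) auto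
  then have "(fst z - fst z) * (snd z - snd z) < area t / \<beta>"
    by (rule beta_tileD[OF assms(1) order_refl order_refl])
  then show ?thesis using assms(3) by (simp add: zero_less_divide_iff)
qed

lemma compact_top_right:
  fixes K :: "pt set"
  assumes "compact K" "K \<noteq> {}"
  obtains X Y where "(X, Y) \<in> K" "\<And>z. z \<in> K \<Longrightarrow> snd z \<le> Y" "\<And>x. (x, Y) \<in> K \<Longrightarrow> x \<le> X"
proof -
  have "compact (snd ` K)" using assms(1) by (intro compact_continuous_image continuous_intros)
  then obtain Y where Y: "Y \<in> snd ` K" "\<And>y. y \<in> snd ` K \<Longrightarrow> y \<le> Y"
    using compact_attains_sup assms(2) by (metis image_is_empty)
  let ?R = "fst ` (K \<inter> {z. snd z = Y})"
  have "compact ?R" using assms(1)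
    by (intro compact_continuous_image compact_Int_closed closed_Collect_eq continuous_intros)
  moreover have "?R \<noteq> {}" using Y(1) by force
  ultimately obtain X where X: "X \<in> ?R" "\<And>x. x \<in> ?R \<Longrightarrow> x \<le> X"
    using compact_attains_sup by metis
  have "(X, Y) \<in> K" using X(1) by force
  moreover have "x \<le> X" if "(x, Y) \<in> K" for x
    using X(2)[of x] that by force
  ultimately show thesis using that Y(2) by blast
qed

lemma finite_gap_right:
  fixes F :: "real set"
  assumes "finite F" "a < b"
  obtains x where "a < x" "x \<le> b" "\<forall>f\<in>F. \<not> (a < f \<and> f \<le> x)"
proof -
  define m where "m = Min (insert b {f \<in> F. a < f})"
  have m: "a < m" "m \<le> b" "\<And>f. f \<in> F \<Longrightarrow> a < f \<Longrightarrow> m \<le> f"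
    using assms by (auto simp: m_def)
  show thesis
  proof (rule that)
    show "\<forall>f\<in>F. \<not> (a < f \<and> f \<le> (a + m) / 2)" using m by force
  qed (use m in auto)
qed

text \<open>(X, Y) is the right end of the top edge of the tile, and no point of S has its abscissa
  in the interval (X, xs].\<close>

locale top_step =
  fixes ps :: "pt list" and p :: pt and X Y xs :: real
  assumes p_in: "p \<in> set ps" "p \<in> unit_square"
    and top: "(X, Y) \<in> closure (tile_core ps p)"
    and Y_max: "\<And>z. z \<in> closure (tile_core ps p) \<Longrightarrow> snd z \<le> Y"
    and X_max: "\<And>x. (x, Y) \<in> closure (tile_core ps p) \<Longrightarrow> x \<le> X"
    and beyond: "\<exists>z\<in>tile ps p. X < fst z \<and> snd p < snd z"
    and gap: "X < xs" "xs \<le> 1" "\<forall>q\<in>set ps. \<not> (X < fst q \<and> fst q \<le> xs)"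
begin

lemma X_ge: "fst p \<le> X"
  using closure_tile_core_ge(1)[OF top] by simp

lemma Y_gt: "snd p < Y"
proof -
  obtain z where z: "z \<in> tile ps p" "X < fst z" "snd p < snd z" using beyond by blast
  have "fst p < fst z" using X_ge z(2) by linarith
  then have "z \<in> closure (tile_core ps p)" using tile_upper_right_in_closure[OF z(1)] z(3) by blast
  then show ?thesis using Y_max[of z] z(3) by linarith
qed

lemma gap_right_of: "X < fst z \<Longrightarrow> \<forall>q\<in>set ps. fst q < fst z \<or> xs \<le> fst q"
  using gap(3) by force

text \<open>If the top edge were degenerate, the points just below (X, Y) would extend to the abscissa xs,
  contradicting the choice of X.\<close>

lemma X_gt: "fst p < X"
proof (rule ccontr)
  assume "\<not> fst p < X"
  then have X: "X = fst p" using X_ge by simp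
  have "(xs, y) \<in> tile_core ps p" if y: "snd p < y" "y < Y" for y
  proof -
    have "0 < min (xs - X) (Y - y)" using gap(1) y(2) by simp
    then obtain z where z: "z \<in> tile_core ps p" "dist z (X, Y) < min (xs - X) (Y - y)"
      using top unfolding closure_approachable by blast
    then have "dist (fst z) X < xs - X" "dist (snd z) Y < Y - y"
      using dist_fst_le[of z "(X, Y)"] dist_snd_le[of z "(X, Y)"] by auto
    then have zx: "fst z < xs" and zy: "y < snd z" by (auto simp: dist_real_def)
    have zp: "fst p < fst z" "snd p < snd z" using z(1) by (auto simp: tile_core_def)
    then have "\<forall>q\<in>set ps. fst q < fst z \<or> xs \<le> fst q" using gap_right_of X by simp
    from tile_core_extend_right[OF closure_subset[THEN subsetD, OF z(1)] zp p_in(2) zx gap(2) this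
        y(1) zy]
    show ?thesis .
  qed
  then have "{xs} \<times> {snd p<..<Y} \<subseteq> tile_core ps p" by auto
  then have "(xs, Y) \<in> closure (tile_core ps p)"
    using closure_vertical_end[of xs "snd p" Y] Y_gt by blast
  then show False using X_max[of xs] gap(1) by linarith
qed

lemma top_rect_subset: "{fst p..X} \<times> {snd p..Y} \<subseteq> tile ps p"
proof -
  have "cbox p (X, Y) \<subseteq> closure (tile_core ps p)"
    using cbox_subset_closure_tile_core[OF top p_in(2)] X_gt Y_gt by auto
  then show ?thesis by (cases p) (auto simp: tile_eq cbox_Pair_eq)
qed

lemma column_reach:
  assumes z: "z \<in> closure (tile_core ps p)" "X < fst z" and y: "snd p < y" "y < snd z"
  shows "(xs, y) \<in> closure (tile_core ps p)"
proof -
  have zp: "fst p < fst z" "snd p < snd z" using X_gt z(2) y by linarith+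
  consider "xs < fst z" | "xs = fst z" | "fst z < xs" by linarith
  then show ?thesis
  proof cases
    case 1
    then have "(xs, y) \<in> tile_core ps p"
      using tile_core_down_closed[OF z(1) p_in(2), of "(xs, y)"] X_gt gap(1) y by simp
    then show ?thesis using closure_subset by blast
  next
    case 2
    have "(x, y) \<in> tile_core ps p" if "X < x" "x < xs" for x
      using tile_core_down_closed[OF z(1) p_in(2), of "(x, y)"] X_gt 2 y that by simp
    then have "{X<..<xs} \<times> {y} \<subseteq> tile_core ps p" by auto
    then show ?thesis using closure_horizontal_end[OF _ gap(1)] by simp
  next
    case 3
    show ?thesis
      using tile_core_extend_right[OF z(1) zp p_in(2) 3 gap(2) gap_right_of[OF z(2)] y]
        closure_subset by blast
  qed
qed

lemma column_top:
  obtains h where "(xs, h) \<in> closure (tile_core ps p)" "snd p < h" "h < Y"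
    "\<And>z. z \<in> tile ps p \<Longrightarrow> X < fst z \<Longrightarrow> snd z \<le> h"
proof -
  let ?C = "closure (tile_core ps p)"
  let ?H = "snd ` (?C \<inter> {z. fst z = xs})"
  have "compact ?H" using bounded_tile_core
    by (intro compact_continuous_image compact_Int_closed closed_Collect_eq continuous_intros)
      (simp_all add: compact_closure)
  obtain z0 where z0: "z0 \<in> tile ps p" "X < fst z0" "snd p < snd z0" using beyond by blast
  then have "z0 \<in> ?C" using tile_upper_right_in_closure X_gt by simp
  then have low: "(xs, (snd p + snd z0) / 2) \<in> ?C" using column_reach z0 by simp
  then have "?H \<noteq> {}" by force
  then obtain h where h: "h \<in> ?H" "\<And>y. y \<in> ?H \<Longrightarrow> y \<le> h"
    using compact_attains_sup[OF \<open>compact ?H\<close>] by metis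
  have hC: "(xs, h) \<in> ?C" using h(1) by force
  have h_max: "y \<le> h" if "(xs, y) \<in> ?C" for y using h(2)[of y] that by force
  have "snd p < h" using h_max[OF low] z0(3) by (simp add: field_simps)
  moreover have "h < Y"
  proof -
    have "h \<noteq> Y" using X_max[of xs] hC gap(1) by auto
    then show ?thesis using Y_max[OF hC] by simp
  qed
  moreover have "snd z \<le> h" if z: "z \<in> tile ps p" "X < fst z" for z
  proof (rule ccontr)
    assume "\<not> snd z \<le> h"
    then have "z \<in> ?C" using tile_upper_right_in_closure[OF z(1)] X_gt z(2) \<open>snd p < h\<close> by simp
    then have "(xs, (h + snd z) / 2) \<in> ?C"
      using column_reach z(2) \<open>snd p < h\<close> \<open>\<not> snd z \<le> h\<close> by simp
    then show False using h_max \<open>\<not> snd z \<le> h\<close> by fastforce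
  qed
  ultimately show thesis using that hC by blast
qed

lemma concave_corner_below_top: "\<exists>h. concave_corner (tile ps p) (X, h)"
proof -
  obtain h where h: "(xs, h) \<in> closure (tile_core ps p)" "snd p < h" "h < Y"
    and below: "\<And>z. z \<in> tile ps p \<Longrightarrow> X < fst z \<Longrightarrow> snd z \<le> h"
    using column_top by blast
  define e where "e = min (min (xs - X) (Y - h)) (min (h - snd p) (X - fst p)) / 2"
  have e: "0 < e" "e < xs - X" "e < Y - h" "e < h - snd p" "e < X - fst p"
    using gap(1) X_gt h by (auto simp: e_def min_def)
  let ?t = "tile ps p"
  have rect: "z \<in> ?t" if "fst p \<le> fst z" "fst z \<le> X" "snd p \<le> snd z" "snd z \<le> Y" for z
    using top_rect_subset that by (cases z) auto
  have "quadrant (X, h) e 1 (-1) \<subseteq> ?t"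
  proof
    fix z assume "z \<in> quadrant (X, h) e 1 (-1)"
    then have "X < fst z" "fst z < xs" "snd p < snd z" "snd z < h" using e
      by (auto simp: quadrant_def)
    then have "z \<in> tile_core ps p" using tile_core_down_closed[OF h(1) p_in(2)] X_gt by simp
    then show "z \<in> ?t" unfolding tile_eq using closure_subset by blast
  qed
  moreover have "z \<notin> ?t" if "z \<in> quadrant (X, h) e 1 1" for z
    using below[of z] that by (auto simp: quadrant_def)
  then have "quadrant (X, h) e 1 1 \<inter> ?t = {}" by blast
  moreover have "z \<in> ?t" if "z \<in> quadrant (X, h) e (-1) 1" for z
    using rect[of z] that e by (auto simp: quadrant_def)
  then have "quadrant (X, h) e (-1) 1 \<subseteq> ?t" by blast
  moreover have "z \<in> ?t" if "z \<in> quadrant (X, h) e (-1) (-1)" for z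
    using rect[of z] that e by (auto simp: quadrant_def)
  then have "quadrant (X, h) e (-1) (-1) \<subseteq> ?t" by blast
  moreover have "(X, h) \<in> ?t" using rect[of "(X, h)"] X_gt h by simp
  ultimately have "concave_corner ?t (X, h)" using concave_cornerI[OF _ e(1)] by simp
  then show ?thesis ..
qed

end

lemma lmeasurable_tile_right:
  assumes "p \<in> set ps" "p \<in> unit_square"
  shows "{z \<in> tile ps p. X < fst z} \<in> lmeasurable"
proof -
  have t: "tile ps p \<in> lmeasurable" using compact_tile[OF assms] by (rule lmeasurable_compact)
  have "open {z::pt. X < fst z}" by (intro open_Collect_less continuous_intros)
  then have "{z::pt. X < fst z} \<in> sets lebesgue" by (simp add: borel_open sets_completionI_sets)
  then have "tile ps p \<inter> {z. X < fst z} \<in> sets lebesgue" using fmeasurableD[OF t] by blast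
  moreover have "{z \<in> tile ps p. X < fst z} = tile ps p \<inter> {z. X < fst z}" by blast
  ultimately have "{z \<in> tile ps p. X < fst z} \<in> sets lebesgue" by simp
  then show ?thesis by (rule fmeasurableI2[OF t, rotated]) blast
qed

lemma tile_subset_below_top:
  assumes top: "\<And>z. z \<in> closure (tile_core ps p) \<Longrightarrow> snd z \<le> Y"
  shows "tile ps p \<subseteq> cbox p (X, Y) \<union> {z \<in> tile ps p. X < fst z} \<union> (aseg ps p \<union> bseg ps p)"
proof
  fix z assume z: "z \<in> tile ps p"
  show "z \<in> cbox p (X, Y) \<union> {z \<in> tile ps p. X < fst z} \<union> (aseg ps p \<union> bseg ps p)"
  proof (cases "z \<in> closure (tile_core ps p)")
    case True
    then have "snd z \<le> Y" "fst p \<le> fst z" "snd p \<le> snd z"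
      using top closure_tile_core_ge by auto
    then have "fst z \<le> X \<Longrightarrow> z \<in> cbox p (X, Y)" by (cases p, cases z) (simp add: cbox_Pair_eq)
    then show ?thesis using z by force
  next
    case False
    then show ?thesis using z by (simp add: tile_eq)
  qed
qed

lemma area_right_of_top:
  assumes p: "p \<in> set ps" "p \<in> unit_square" and bt: "beta_tile \<beta> (tile ps p)" and "0 < \<beta>"
    and top: "(X, Y) \<in> closure (tile_core ps p)" "\<And>z. z \<in> closure (tile_core ps p) \<Longrightarrow> snd z \<le> Y"
  shows "area (tile ps p) - area (tile ps p) / \<beta> \<le> area {z \<in> tile ps p. X < fst z}"
proof -
  let ?t = "tile ps p" and ?D = "{z \<in> tile ps p. X < fst z}" and ?R = "cbox p (X, Y)"
    and ?N = "aseg ps p \<union> bseg ps p"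
  have R: "?R \<in> lmeasurable" by simp
  have D: "?D \<in> lmeasurable" by (rule lmeasurable_tile_right[OF p])
  have pXY: "fst p \<le> X" "snd p \<le> Y" using closure_tile_core_ge[OF top(1)] by auto
  have area_R: "area ?R \<le> area ?t / \<beta>"
  proof (cases "fst p < X \<and> snd p < Y")
    case True
    then have "{fst p..X} \<times> {snd p..Y} \<subseteq> ?t"
      using cbox_subset_closure_tile_core[OF top(1) p(2)]
      by (cases p) (auto simp: tile_eq cbox_Pair_eq)
    then have "(X - fst p) * (Y - snd p) < area ?t / \<beta>" by (rule beta_tileD[OF bt pXY])
    then show ?thesis using area_cbox[OF pXY] by (cases p) simp
  next
    case False
    then have "area ?R = 0" using area_cbox[OF pXY] pXY by (cases p) auto
    then show ?thesis using \<open>0 < \<beta>\<close> by (simp add: area_def)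
  qed
  have "?t \<subseteq> ?R \<union> ?D \<union> ?N" by (rule tile_subset_below_top) (rule top(2))
  then have "area ?t \<le> area (?R \<union> ?D \<union> ?N)"
    by (rule area_mono) (intro fmeasurable.Un R D area_rays(1))
  also have "\<dots> \<le> area (?R \<union> ?D) + area ?N"
    by (intro area_Un_le fmeasurableD fmeasurable.Un R D area_rays(1))
  also have "\<dots> \<le> area ?R + area ?D + area ?N"
    using area_Un_le[OF fmeasurableD[OF R] fmeasurableD[OF D]] by simp
  finally show ?thesis using area_R area_rays(2)[of ps p] by linarith
qed

lemma tile_positive_area_above:
  assumes p: "p \<in> set ps" "p \<in> unit_square" and D: "D \<subseteq> tile ps p" "0 < area D"
  shows "\<exists>z\<in>D. snd p < snd z"
proof (rule ccontr)
  assume none: "\<not> (\<exists>z\<in>D. snd p < snd z)"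
  have "z \<in> {0..1} \<times> {snd p}" if "z \<in> D" for z
  proof -
    have "z \<in> tile ps p" "\<not> snd p < snd z" using that D(1) none by auto
    then show ?thesis
      using tile_ge[of z ps p] tile_subset_unit_square[OF p]
      by (auto simp: unit_square_def mem_Times_iff)
  qed
  then have "area D \<le> area ({0..1} \<times> {snd p})"
    by (intro area_mono subsetI lmeasurable_compact compact_Times) auto
  then show False using D(2) area_segment_horizontal by simp
qed

lemma beta_tile_right_corner:
  assumes p: "p \<in> set ps" "p \<in> unit_square" and bt: "beta_tile \<beta> (tile ps p)"
    and \<alpha>: "0 < \<alpha>" "1 + \<alpha> \<le> \<beta>"
  obtains c where "concave_corner (tile ps p) c"
    "\<alpha> / \<beta> * area (tile ps p) \<le> area {z \<in> tile ps p. fst c < fst z}"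
proof -
  let ?t = "tile ps p" and ?C = "closure (tile_core ps p)"
  have \<beta>: "0 < \<beta>" using \<alpha> by linarith
  have A: "0 < area ?t" using beta_tile_area_pos[OF bt point_in_tile[OF p] \<beta>] .
  have "?C \<noteq> {}"
  proof
    assume "?C = {}"
    then have "area ?t \<le> area (aseg ps p \<union> bseg ps p)"
      by (intro area_mono area_rays(1)) (simp add: tile_eq)
    then show False using A area_rays(2)[of ps p] by simp
  qed
  moreover have "compact ?C" using bounded_tile_core by (simp add: compact_closure)
  ultimately obtain X Y where top: "(X, Y) \<in> ?C" "\<And>z. z \<in> ?C \<Longrightarrow> snd z \<le> Y"
    "\<And>x. (x, Y) \<in> ?C \<Longrightarrow> x \<le> X"
    using compact_top_right by metis
  let ?D = "{z \<in> ?t. X < fst z}"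
  have "(1 + \<alpha>) * area ?t \<le> \<beta> * area ?t" using \<alpha>(2) A by (intro mult_right_mono) auto
  then have "\<alpha> / \<beta> * area ?t \<le> area ?t - area ?t / \<beta>" using \<beta> by (simp add: field_simps)
  then have D: "\<alpha> / \<beta> * area ?t \<le> area ?D"
    using area_right_of_top[OF p bt \<beta> top(1,2)] by linarith
  then have "0 < area ?D" using \<alpha> \<beta> A by (smt (verit) divide_pos_pos mult_pos_pos)
  then obtain z where z: "z \<in> ?t" "X < fst z" "snd p < snd z"
    using tile_positive_area_above[OF p, of ?D] by auto
  then have "X < 1" using tile_subset_unit_square[OF p] by (auto simp: unit_square_def)
  then obtain xs where "X < xs" "xs \<le> 1" "\<forall>q\<in>set ps. \<not> (X < fst q \<and> fst q \<le> xs)"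
    using finite_gap_right[of "fst ` set ps" X 1] by auto
  then interpret top_step ps p X Y xs
    using p top z by unfold_locales auto
  obtain h where "concave_corner ?t (X, h)" using concave_corner_below_top by blast
  then show thesis using that D by simp
qed

lemma smallest_area_in: "finite C \<Longrightarrow> C \<noteq> {} \<Longrightarrow> smallest_area C \<in> C"
proof -
  assume C: "finite C" "C \<noteq> {}"
  define P where "P R \<longleftrightarrow> R \<in> C \<and> (\<forall>R'\<in>C. area R \<le> area R')" for R
  obtain R where "P R" unfolding P_def
    using arg_min_if_finite[OF C, of area] by (metis not_le)
  then have "P (SOME R. P R)" by (rule someI)
  then show ?thesis using C(2) by (simp add: smallest_area_def P_def)
qed

lemma finite_right_cands:
  assumes "p \<in> set ps" "p \<in> unit_square"
  shows "finite (right_cands \<alpha> \<beta> (tile ps p))"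
proof -
  have "right_cands \<alpha> \<beta> (tile ps p) \<subseteq> (\<lambda>c. {z \<in> tile ps p. fst z > fst c}) ` set ps"
    using concave_corner_in_points[OF _ assms] unfolding right_cands_def by blast
  then show ?thesis using finite_surj by blast
qed

lemma finite_upper_cands:
  assumes "p \<in> set ps" "p \<in> unit_square"
  shows "finite (upper_cands \<alpha> \<beta> (tile ps p))"
proof -
  have "upper_cands \<alpha> \<beta> (tile ps p) \<subseteq> (\<lambda>c. {z \<in> tile ps p. snd z > snd c}) ` set ps"
    using concave_corner_in_points[OF _ assms] unfolding upper_cands_def by blast
  then show ?thesis using finite_surj by blast
qed

lemma right_tip_of_beta_tile:
  assumes p: "p \<in> set ps" "p \<in> unit_square" and bt: "beta_tile \<beta> (tile ps p)"
    and \<alpha>: "0 < \<alpha>" "1 + \<alpha> \<le> \<beta>"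
  obtains c where "concave_corner (tile ps p) c"
    "right_tip \<alpha> \<beta> (tile ps p) = {z \<in> tile ps p. fst c < fst z}"
    "\<alpha> / \<beta> * area (tile ps p) \<le> area (right_tip \<alpha> \<beta> (tile ps p))"
proof -
  obtain c where "concave_corner (tile ps p) c"
    "\<alpha> / \<beta> * area (tile ps p) \<le> area {z \<in> tile ps p. fst c < fst z}"
    using beta_tile_right_corner[OF p bt \<alpha>] by blast
  then have "right_cands \<alpha> \<beta> (tile ps p) \<noteq> {}" unfolding right_cands_def by blast
  then have "right_tip \<alpha> \<beta> (tile ps p) \<in> right_cands \<alpha> \<beta> (tile ps p)"
    unfolding right_tip_def using smallest_area_in finite_right_cands[OF p] by blast
  then show thesis using that unfolding right_cands_def by blast
qed

lemma upper_tip_above: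
  assumes p: "p \<in> set ps" "p \<in> unit_square" and z: "z \<in> upper_tip \<alpha> \<beta> (tile ps p)"
  shows "snd p < snd z"
proof -
  have "upper_cands \<alpha> \<beta> (tile ps p) \<noteq> {}"
    using z unfolding upper_tip_def smallest_area_def by auto
  then have "upper_tip \<alpha> \<beta> (tile ps p) \<in> upper_cands \<alpha> \<beta> (tile ps p)"
    unfolding upper_tip_def using smallest_area_in finite_upper_cands[OF p] by blast
  then obtain c where "c \<in> tile ps p" "upper_tip \<alpha> \<beta> (tile ps p) = {z \<in> tile ps p. snd z > snd c}"
    unfolding upper_cands_def concave_corner_def by blast
  then show ?thesis using z tile_ge[of c ps p] by auto
qed

lemma concave_corner_gap:
  assumes p: "p \<in> set ps" "p \<in> unit_square" and bt: "beta_tile \<beta> (tile ps p)" and "0 < \<alpha>"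
    and cc: "concave_corner (tile ps p) c"
    and R: "\<alpha> / \<beta> * area (tile ps p) \<le> area {z \<in> tile ps p. fst c < fst z}"
  shows "\<alpha> * (fst c - fst p) < 1 - fst c"
proof -
  let ?t = "tile ps p" and ?W = "fst c - fst p" and ?h = "snd c - snd p"
  obtain e where pc: "fst p < fst c" "snd p < snd c" using concave_corner_of_tile[OF cc p(2)]
    by metis
  have cT: "c \<in> ?t" using cc unfolding concave_corner_def by blast
  then have "cbox p c \<subseteq> closure (tile_core ps p)"
    using cbox_subset_closure_tile_core[OF tile_upper_right_in_closure[OF cT pc] p(2) pc] by blast
  then have "{fst p..fst c} \<times> {snd p..snd c} \<subseteq> ?t"
    by (cases p, cases c) (auto simp: tile_eq cbox_Pair_eq)
  then have Wh: "?W * ?h < area ?t / \<beta>" using beta_tileD[OF bt] pc by simp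
  have c1: "fst c \<le> 1" using cT tile_subset_unit_square[OF p] by (auto simp: unit_square_def)
  have "z \<in> cbox (fst c, snd p) (1, snd c)" if "z \<in> ?t" "fst c < fst z" for z
    using tile_right_of_concave_corner[OF cc p(2) that] tile_ge[OF that(1)] that
      tile_subset_unit_square[OF p]
    by (cases z) (auto simp: cbox_Pair_eq unit_square_def)
  then have "{z \<in> ?t. fst c < fst z} \<subseteq> cbox (fst c, snd p) (1, snd c)" by blast
  then have "area {z \<in> ?t. fst c < fst z} \<le> (1 - fst c) * ?h"
    using area_mono[of _ "cbox (fst c, snd p) (1, snd c)"] area_cbox[OF c1] pc by fastforce
  moreover have "\<alpha> * (?W * ?h) < \<alpha> * (area ?t / \<beta>)" using Wh \<open>0 < \<alpha>\<close> by (rule mult_strict_left_mono)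
  ultimately have "(\<alpha> * ?W) * ?h < (1 - fst c) * ?h" using R by (simp add: mult.assoc)
  then show ?thesis using pc by (simp add: mult_less_cancel_right)
qed

lemma a'_len_bounds:
  assumes p: "p \<in> set ps" "p \<in> unit_square" and bt: "beta_tile \<beta> (tile ps p)"
    and \<alpha>: "0 < \<alpha>" "1 + \<alpha> \<le> \<beta>"
  shows "0 \<le> a'_len \<alpha> \<beta> ps p" "a'_len \<alpha> \<beta> ps p * (1 + \<alpha>) \<le> 1 - fst p"
proof -
  let ?t = "tile ps p"
  let ?M = "{fst z - fst p | z. z \<in> main_body \<alpha> \<beta> ?t \<and> snd z = snd p}"
  obtain c where cc: "concave_corner ?t c" and RT: "right_tip \<alpha> \<beta> ?t = {z \<in> ?t. fst c < fst z}"
    and area_RT: "\<alpha> / \<beta> * area ?t \<le> area (right_tip \<alpha> \<beta> ?t)"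
    using right_tip_of_beta_tile[OF p bt \<alpha>] by blast
  have "fst p < fst c" using concave_corner_of_tile[OF cc p(2)] by metis
  then have "p \<in> main_body \<alpha> \<beta> ?t"
    using point_in_tile[OF p] upper_tip_above[OF p, of p \<alpha> \<beta>] unfolding main_body_def RT by auto
  then have M0: "0 \<in> ?M" by force
  have M_le: "x \<le> fst c - fst p" if "x \<in> ?M" for x
    using that unfolding main_body_def RT by auto
  have "0 \<le> Sup ?M" using cSup_upper[OF M0 bdd_aboveI[OF M_le]] .
  moreover have "Sup ?M \<le> fst c - fst p" using cSup_least[of ?M] M0 M_le by blast
  moreover have "\<alpha> * (fst c - fst p) < 1 - fst c"
    using concave_corner_gap[OF p bt \<alpha>(1) cc] area_RT RT by simp
  ultimately show "0 \<le> a'_len \<alpha> \<beta> ps p" "a'_len \<alpha> \<beta> ps p * (1 + \<alpha>) \<le> 1 - fst p"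
    unfolding a'_len_def using mult_right_mono[of "Sup ?M" "fst c - fst p" "1 + \<alpha>"] \<alpha>(1)
    by (auto simp: algebra_simps)
qed

section \<open>The trapezoid below the unit square\<close>

lemma nn_integral_continuous_on_interval:
  fixes h :: "real \<Rightarrow> real"
  assumes h: "continuous_on {a..b} h" "\<And>v. v \<in> {a..b} \<Longrightarrow> 0 \<le> h v"
  shows "(\<integral>\<^sup>+v. ennreal (indicator {a..b} v * h v) \<partial>lborel) = ennreal (integral {a..b} h)"
proof (rule nn_integral_has_integral_lborel)
  show "(\<lambda>v. indicator {a..b} v * h v) \<in> borel_measurable borel"
    using borel_measurable_continuous_on_indicator[OF _ h(1)] by simp
  show "0 \<le> indicator {a..b} v * h v" for v using h(2) by (simp add: indicator_def)
  have "((\<lambda>v. if v \<in> {a..b} then h v else 0) has_integral integral {a..b} h) UNIV"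
    using integrable_integral[OF integrable_continuous_interval[OF h(1)]]
    by (simp only: has_integral_restrict_UNIV)
  moreover have "(\<lambda>v. indicator {a..b} v * h v) = (\<lambda>v. if v \<in> {a..b} then h v else 0)"
    by (auto simp: indicator_def)
  ultimately show "((\<lambda>v. indicator {a..b} v * h v) has_integral integral {a..b} h) UNIV"
    by (simp only:)
qed

lemma area_between_graphs:
  fixes f g :: "real \<Rightarrow> real"
  assumes f: "continuous_on UNIV f" and g: "continuous_on UNIV g"
    and fg: "\<And>v. v \<in> {a..b} \<Longrightarrow> f v \<le> g v"
  defines "R \<equiv> {z. a \<le> snd z \<and> snd z \<le> b \<and> f (snd z) \<le> fst z \<and> fst z \<le> g (snd z)}"
  shows "R \<in> lmeasurable" "area R = integral {a..b} (\<lambda>v. g v - f v)"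
proof -
  let ?I = "integral {a..b} (\<lambda>v. g v - f v)"
  have "continuous_on UNIV (\<lambda>z::pt. f (snd z))" "continuous_on UNIV (\<lambda>z::pt. g (snd z))"
    by (rule continuous_on_compose2[OF f continuous_on_snd]
        continuous_on_compose2[OF g continuous_on_snd];
        simp)+
  then have "closed R" unfolding R_def
    by (intro closed_Collect_conj closed_Collect_le continuous_intros) auto
  then have R: "R \<in> sets borel" by (rule borel_closed)
  have slice: "emeasure lborel ((\<lambda>u. (u, v)) -` R) = ennreal (indicator {a..b} v * (g v - f v))"
    for v
  proof (cases "v \<in> {a..b}")
    case True
    then have "(\<lambda>u. (u, v)) -` R = {f v..g v}" by (auto simp: R_def)
    then show ?thesis using True fg[OF True] by simp
  next
    case False
    then have "(\<lambda>u. (u, v)) -` R = {}" by (auto simp: R_def)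
    then show ?thesis using False by simp
  qed
  have "continuous_on {a..b} (\<lambda>v. g v - f v)"
    by (intro continuous_on_diff continuous_on_subset[OF g] continuous_on_subset[OF f]) auto
  then have I: "(\<integral>\<^sup>+v. ennreal (indicator {a..b} v * (g v - f v)) \<partial>lborel) = ennreal ?I" "0 \<le> ?I"
    using fg by (auto intro!: nn_integral_continuous_on_interval integral_nonneg
        integrable_continuous_interval)
  have "emeasure lborel R = emeasure (lborel \<Otimes>\<^sub>M lborel) R" by (simp add: lborel_prod)
  also have "\<dots> = (\<integral>\<^sup>+v. emeasure lborel ((\<lambda>u. (u, v)) -` R) \<partial>lborel)"
    by (rule lborel_pair.emeasure_pair_measure_alt2) (unfold lborel_prod, simp add: R)
  finally have emeasure_R: "emeasure lborel R = ennreal ?I" by (simp add: slice I(1))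
  show "R \<in> lmeasurable"
    using R emeasure_R by (intro fmeasurableI) (auto intro: sets_completionI_sets)
  show "area R = ?I"
    using R emeasure_R I(2) by (simp add: area_def measure_def)
qed

text \<open>The trapezoid with vertices (0, 0), (1, 0), ((1 + lam) / (1 + \<alpha>), - lam / (1 + \<alpha>)) and
  (lam / (1 + \<alpha>), - lam / (1 + \<alpha>)); together with the unit square it forms a convex polygon
  that contains every parallelogram.\<close>

definition trapezoid :: "real \<Rightarrow> real \<Rightarrow> pt set" where
  "trapezoid \<alpha> lam = {z. - (lam / (1 + \<alpha>)) \<le> snd z \<and> snd z \<le> 0 \<and>
      - snd z \<le> fst z \<and> fst z \<le> 1 + (\<alpha> - lam) / lam * snd z}"

lemma integral_trapezoid_width:
  fixes lam \<alpha> :: real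
  assumes "0 < lam" "0 < \<alpha>"
  shows "integral {- (lam / (1 + \<alpha>))..0} (\<lambda>v. 1 + \<alpha> / lam * v) = lam * (2 + \<alpha>) / (2 * (1 + \<alpha>)^2)"
proof -
  define G where "G v = v + \<alpha> / (2 * lam) * v^2" for v :: real
  have "(G has_vector_derivative (1 + \<alpha> / lam * v)) (at v within {- (lam / (1 + \<alpha>))..0})" for v
    unfolding G_def has_real_derivative_iff_has_vector_derivative[symmetric]
    using assms by (auto intro!: derivative_eq_intros)
  then have "((\<lambda>v. 1 + \<alpha> / lam * v) has_integral G 0 - G (- (lam / (1 + \<alpha>))))
      {- (lam / (1 + \<alpha>))..0}"
    using assms by (intro fundamental_theorem_of_calculus) auto
  moreover have "G 0 - G (- (lam / (1 + \<alpha>))) = lam * (2 + \<alpha>) / (2 * (1 + \<alpha>)^2)"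
  proof -
    define s where "s = 1 + \<alpha>"
    have "s \<noteq> 0" "lam \<noteq> 0" using assms by (auto simp: s_def)
    then have "G 0 - G (- (lam / s)) = lam * (2 * s - \<alpha>) / (2 * s^2)"
      by (simp add: G_def field_simps power2_eq_square)
    then show ?thesis by (simp add: s_def)
  qed
  ultimately show ?thesis by (simp add: integral_unique)
qed

lemma trapezoid_area:
  assumes "0 < lam" "lam < \<alpha>"
  shows "trapezoid \<alpha> lam \<in> lmeasurable"
    "area (trapezoid \<alpha> lam) = lam * (2 + \<alpha>) / (2 * (1 + \<alpha>)^2)"
proof -
  let ?f = "\<lambda>v::real. - v" and ?g = "\<lambda>v. 1 + (\<alpha> - lam) / lam * v" and ?a = "- (lam / (1 + \<alpha>))"
  have \<alpha>: "0 < \<alpha>" using assms by linarith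
  have width: "?g v - ?f v = 1 + \<alpha> / lam * v" for v using assms by (simp add: field_simps)
  have fg: "?f v \<le> ?g v" if "v \<in> {?a..0}" for v
  proof -
    have "\<alpha> / lam * ?a = - (\<alpha> / (1 + \<alpha>))" using assms by (simp add: field_simps)
    moreover have "\<alpha> / lam * ?a \<le> \<alpha> / lam * v" using that assms \<alpha> by (intro mult_left_mono) auto
    moreover have "\<alpha> / (1 + \<alpha>) \<le> 1" using \<alpha> by simp
    ultimately have "0 \<le> 1 + \<alpha> / lam * v" by linarith
    then show ?thesis using width[of v] by simp
  qed
  have cont: "continuous_on UNIV ?f" "continuous_on UNIV ?g" by (intro continuous_intros)+
  have eq: "trapezoid \<alpha> lam = {z. ?a \<le> snd z \<and> snd z \<le> 0 \<and> ?f (snd z) \<le> fst z \<and> fst z \<le> ?g (snd z)}"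
    by (simp add: trapezoid_def)
  show "trapezoid \<alpha> lam \<in> lmeasurable"
    unfolding eq by (rule area_between_graphs(1)[OF cont fg])
  have "area (trapezoid \<alpha> lam) = integral {?a..0} (\<lambda>v. ?g v - ?f v)"
    unfolding eq by (rule area_between_graphs(2)[OF cont fg])
  also have "(\<lambda>v. ?g v - ?f v) = (\<lambda>v. 1 + \<alpha> / lam * v)" using width by (rule ext)
  finally show "area (trapezoid \<alpha> lam) = lam * (2 + \<alpha>) / (2 * (1 + \<alpha>)^2)"
    using integral_trapezoid_width[OF assms(1) \<alpha>] by simp
qed

lemma unit_square_Un_trapezoid:
  assumes "0 < lam" "lam < \<alpha>"
  shows "unit_square \<union> trapezoid \<alpha> lam = {z. 0 \<le> fst z \<and> fst z \<le> 1 \<and> snd z \<le> 1 \<and>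
    - (lam / (1 + \<alpha>)) \<le> snd z \<and> 0 \<le> fst z + snd z \<and> lam * fst z \<le> lam + (\<alpha> - lam) * snd z}"
    (is "_ = ?K")
proof -
  have "0 \<le> lam / (1 + \<alpha>)" using assms by simp
  moreover have "x \<le> 1 + (\<alpha> - lam) / lam * y \<longleftrightarrow> lam * x \<le> lam + (\<alpha> - lam) * y" for x y
    using assms(1) by (simp add: field_simps)
  moreover have "lam * x \<le> lam + (\<alpha> - lam) * y" if "x \<le> 1" "0 \<le> y" for x y
    using assms that mult_left_mono[of x 1 lam] mult_nonneg_nonneg[of "\<alpha> - lam" y] by linarith
  moreover have "x \<le> 1" if "lam * x \<le> lam + (\<alpha> - lam) * y" "y \<le> 0" for x y
  proof -
    have "lam * x \<le> lam * 1" using assms that mult_nonneg_nonpos[of "\<alpha> - lam" y] by linarith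
    then show ?thesis using assms(1) by (simp add: mult_le_cancel_left_pos)
  qed
  ultimately show ?thesis
    unfolding unit_square_def trapezoid_def by (auto simp: mem_Times_iff)
qed

lemma convex_unit_square_Un_trapezoid:
  assumes "0 < lam" "lam < \<alpha>"
  shows "convex (unit_square \<union> trapezoid \<alpha> lam)"
proof -
  have "unit_square \<union> trapezoid \<alpha> lam = {z. inner (-1, 0) z \<le> 0} \<inter> {z. inner (1, 0) z \<le> 1}
      \<inter> {z. inner (0, 1) z \<le> 1} \<inter> {z. inner (0, -1) z \<le> lam / (1 + \<alpha>)}
      \<inter> {z. inner (-1, -1) z \<le> 0} \<inter> {z. inner (lam, - (\<alpha> - lam)) z \<le> lam}"
    unfolding unit_square_Un_trapezoid[OF assms] by (auto simp: inner_Pair algebra_simps)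
  then show ?thesis by (simp add: convex_Int convex_halfspace_le)
qed

lemma parallelogram_subset:
  assumes lam: "0 < lam" "lam < \<alpha>" and xy: "(x, y) \<in> unit_square"
    and L: "0 \<le> L" "L * (1 + \<alpha>) \<le> 1 - x"
  shows "parallelogram lam (x, y) L \<subseteq> unit_square \<union> trapezoid \<alpha> lam" (is "_ \<subseteq> ?K")
proof -
  have K: "(a, b) \<in> ?K \<longleftrightarrow> 0 \<le> a \<and> a \<le> 1 \<and> b \<le> 1 \<and> - (lam / (1 + \<alpha>)) \<le> b \<and>
      0 \<le> a + b \<and> lam * a \<le> lam + (\<alpha> - lam) * b" for a b
    unfolding unit_square_Un_trapezoid[OF lam] by simp
  have x: "0 \<le> x" and y: "0 \<le> y" "y \<le> 1" using xy by (auto simp: unit_square_def)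
  have "lam * L \<le> \<alpha> * L" "0 \<le> lam * L" "0 \<le> \<alpha> * L" "lam * y \<le> \<alpha> * y" "0 \<le> lam / (1 + \<alpha>)"
    "0 \<le> lam * (\<alpha> * L)"
    using lam L(1) y by (auto intro: mult_right_mono)
  moreover have "lam * L \<le> lam / (1 + \<alpha>)"
    using lam L(2) x mult_left_mono[of "L * (1 + \<alpha>)" 1 lam] by (simp add: field_simps)
  moreover have "lam * (x + (1 + \<alpha>) * L) \<le> lam"
    using lam L(2) mult_left_mono[of "x + (1 + \<alpha>) * L" 1 lam] by (simp add: algebra_simps)
  ultimately have ineqs: "lam * L \<le> \<alpha> * L" "0 \<le> lam * L" "0 \<le> \<alpha> * L" "lam * y \<le> \<alpha> * y"
    "0 \<le> lam / (1 + \<alpha>)" "0 \<le> lam * (\<alpha> * L)" "lam * L \<le> lam / (1 + \<alpha>)"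
    "lam * (x + (1 + \<alpha>) * L) \<le> lam"
    by auto
  note facts = ineqs x y L lam
  have "(x, y) \<in> ?K" unfolding K
    by (intro conjI; (simp only: algebra_simps)?; insert facts[simplified algebra_simps]; linarith)
  moreover have "(x + L, y) \<in> ?K" unfolding K
    by (intro conjI; (simp only: algebra_simps)?; insert facts[simplified algebra_simps]; linarith)
  moreover have "(x + (1 + lam) * L, y - lam * L) \<in> ?K" unfolding K
    by (intro conjI; (simp only: algebra_simps)?; insert facts[simplified algebra_simps]; linarith)
  moreover have "(x + lam * L, y - lam * L) \<in> ?K" unfolding K
    by (intro conjI; (simp only: algebra_simps)?; insert facts[simplified algebra_simps]; linarith)
  ultimately show ?thesis
    unfolding parallelogram_def using convex_unit_square_Un_trapezoid[OF lam]
    by (intro hull_minimal) auto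
qed

lemma lmeasurable_paraA: "paraA \<alpha> \<beta> lam ps p \<in> lmeasurable"
  unfolding paraA_def parallelogram_def
  by (intro lmeasurable_compact compact_convex_hull finite_imp_compact) auto

lemma paraA_subset:
  assumes p: "p \<in> G_nodes \<beta> ps" and S: "set ps \<subseteq> unit_square"
    and lam: "0 < lam" "lam < \<alpha>" and \<beta>: "1 + \<alpha> \<le> \<beta>"
  shows "paraA \<alpha> \<beta> lam ps p \<subseteq> unit_square \<union> trapezoid \<alpha> lam"
proof -
  have p': "p \<in> set ps" "p \<in> unit_square" "beta_tile \<beta> (tile ps p)"
    using p S by (auto simp: G_nodes_def)
  have "0 < \<alpha>" using lam by linarith
  show ?thesis
    using parallelogram_subset[OF lam _ a'_len_bounds[OF p' \<open>0 < \<alpha>\<close> \<beta>]] p'(2)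
    by (cases p) (simp add: paraA_def)
qed

lemma area_unit_square_Un_trapezoid:
  assumes "0 < lam" "lam < \<alpha>"
  shows "unit_square \<union> trapezoid \<alpha> lam \<in> lmeasurable"
    "area (unit_square \<union> trapezoid \<alpha> lam) \<le> (2 * (1 + \<alpha>)^2 + lam * (2 + \<alpha>)) / (2 * (1 + \<alpha>)^2)"
proof -
  have T: "trapezoid \<alpha> lam \<in> lmeasurable" by (rule trapezoid_area(1)[OF assms])
  then show "unit_square \<union> trapezoid \<alpha> lam \<in> lmeasurable"
    by (simp add: unit_square_cbox fmeasurable.Un)
  have "area (unit_square \<union> trapezoid \<alpha> lam) \<le> area unit_square + area (trapezoid \<alpha> lam)"
    using T by (intro area_Un_le) (auto simp: unit_square_cbox)
  also have "\<dots> = (2 * (1 + \<alpha>)^2 + lam * (2 + \<alpha>)) / (2 * (1 + \<alpha>)^2)"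
    using trapezoid_area(2)[OF assms] assms
    by (simp add: unit_square_cbox area_cbox add_divide_distrib)
  finally show "area (unit_square \<union> trapezoid \<alpha> lam) \<le> \<dots>" .
qed

section \<open>Level-1 parallelograms\<close>

lemma strict_linear_order_on_greatest:
  assumes r: "strict_linear_order_on S r" and X: "finite X" "X \<noteq> {}" "X \<subseteq> S"
  obtains m where "m \<in> X" "\<forall>q\<in>X. q = m \<or> (m, q) \<in> r"
proof -
  have "trans r" "irrefl r" "total_on S r" using r by (auto simp: strict_linear_order_on_def)
  let ?r = "r \<inter> X \<times> X"
  have "trans ?r" using \<open>trans r\<close> by (auto simp: trans_def)
  then have "acyclic ?r" using \<open>irrefl r\<close> by (simp add: acyclic_irrefl irrefl_def)
  moreover have "finite ?r" using X(1) by (auto intro: finite_subset[of _ "X \<times> X"])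
  ultimately have "wf ?r" by (rule finite_acyclic_wf[rotated])
  then obtain m where m: "m \<in> X" "\<And>y. (y, m) \<in> ?r \<Longrightarrow> y \<notin> X"
    using wfE_min[of ?r] X(2) by blast
  have "(m, q) \<in> r" if "q \<in> X" "q \<noteq> m" for q
    using \<open>total_on S r\<close> m that X(3) unfolding total_on_def by blast
  then show thesis using that m(1) by blast
qed

lemma level1_no_out_candidates:
  assumes "strict_linear_order_on (set ps) gy" "p \<in> level1 \<alpha> \<beta> lam ps gy"
  shows "out_candidates \<alpha> \<beta> lam ps gy p = {}"
proof (rule ccontr)
  let ?X = "out_candidates \<alpha> \<beta> lam ps gy p"
  assume "?X \<noteq> {}"
  moreover have "?X \<subseteq> set ps" by (auto simp: out_candidates_def G_nodes_def)
  ultimately obtain m where "m \<in> ?X" "\<forall>q\<in>?X. q = m \<or> (m, q) \<in> gy"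
    using strict_linear_order_on_greatest[OF assms(1)] finite_subset by blast
  then have "G_edge \<alpha> \<beta> lam ps gy p m" using assms(2) by (simp add: G_edge_def level1_def)
  then show False using assms(2) unfolding level1_def by blast
qed

lemma level1_paraA_disjoint:
  assumes gy: "strict_linear_order_on (set ps) gy"
    and pq: "p \<in> level1 \<alpha> \<beta> lam ps gy" "q \<in> level1 \<alpha> \<beta> lam ps gy" "p \<noteq> q"
  shows "paraA \<alpha> \<beta> lam ps p \<inter> paraA \<alpha> \<beta> lam ps q = {}"
proof -
  have "p \<in> G_nodes \<beta> ps" "q \<in> G_nodes \<beta> ps" using pq by (auto simp: level1_def)
  moreover have "(p, q) \<in> gy \<or> (q, p) \<in> gy"
    using gy pq(3) calculation unfolding strict_linear_order_on_def total_on_def G_nodes_def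
    by blast
  ultimately show ?thesis
    using level1_no_out_candidates[OF gy pq(1)] level1_no_out_candidates[OF gy pq(2)] pq(3)
    unfolding out_candidates_def by blast
qed

theorem lemma5:
  fixes \<alpha> \<beta> lam :: real and S :: "pt set" and ps :: "pt list"
    and gy :: "(pt \<times> pt) set"
  assumes "\<beta> \<ge> 3 + 2 * \<alpha>" and "0 < lam" and "lam < \<alpha>"
    and "finite S" and "S \<subseteq> unit_square" and "(0, 0) \<in> S"
    and "distinct ps" and "set ps = S"
    and "sorted_wrt (\<lambda>p q. fst p + snd p \<ge> fst q + snd q) ps"
    and "strict_linear_order_on S gy"
    and "\<forall>p\<in>S. \<forall>q\<in>S. snd p > snd q \<longrightarrow> (p, q) \<in> gy"
  shows "(\<Sum>p\<in>level1 \<alpha> \<beta> lam ps gy. area (paraA \<alpha> \<beta> lam ps p))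
           \<le> (2 * (1 + \<alpha>)^2 + lam * (2 + \<alpha>)) / (2 * (1 + \<alpha>)^2)"
proof -
  let ?L = "level1 \<alpha> \<beta> lam ps gy" and ?P = "paraA \<alpha> \<beta> lam ps"
  have L: "?L \<subseteq> G_nodes \<beta> ps" by (auto simp: level1_def)
  then have "finite ?L" by (auto simp: G_nodes_def intro: finite_subset)
  then have "(\<Sum>p\<in>?L. area (?P p)) = area (\<Union>p\<in>?L. ?P p)"
    using level1_paraA_disjoint[OF assms(10)[folded assms(8)]] lmeasurable_paraA
    unfolding area_def by (intro measure_UNION'[symmetric]) (auto simp: pairwise_def disjnt_def)
  also have "\<dots> \<le> area (unit_square \<union> trapezoid \<alpha> lam)"
  proof (rule area_mono[OF UN_least area_unit_square_Un_trapezoid(1)[OF assms(2,3)]])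
    show "?P p \<subseteq> unit_square \<union> trapezoid \<alpha> lam" if "p \<in> ?L" for p
      using paraA_subset[OF L[THEN subsetD, OF that] _ assms(2,3)] assms(1-3,5,8) by simp
  qed
  also have "\<dots> \<le> (2 * (1 + \<alpha>)^2 + lam * (2 + \<alpha>)) / (2 * (1 + \<alpha>)^2)"
    by (rule area_unit_square_Un_trapezoid(2)[OF assms(2,3)])
  finally show ?thesis .
qed

end
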